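(* We have $\det(A)\neq0$ if and only if condition (C3) holds and $A\neq0$. If $\det(A)\ne0$ and $\int_{\mathbb{R}^d}|x|^2N(dx)<\infty$, then (C3) holds with $T_3=\infty$.
   Context: $Y$ is a Lévy process in $\mathbb{R}^d$ with generating triplet $(A,N,b)$ ($A$ symmetric non-negative definite $d\times d$ matrix, $b\in\mathbb{R}^d$, $N$ Lévy measure), characteristic exponent $\Psi$ ($\mathbb{E}e^{i\langle x,Y_t\rangle}=e^{-t\Psi(x)}$), $\Psi^*(r)=\sup_{|z|\le r}\mathrm{Re}\,\Psi(z)$. Standing assumption: $h(0^+)=\infty$ where $h(r)=r^{-2}\|A\|+\int(1\wedge|x|^2/r^2)N(dx)$. Condition (C3): there are $T_3\in(0,\infty]$, $c_3\in(0,1]$, $\alpha_3\in(0,2]$ such that $c_3\Psi^*(|x|)\le\mathrm{Re}\Psi(x)$ for all $|x|>1/T_3$, and $\Psi^*(\lambda r)\ge c_3\lambda^{\alpha_3}\Psi^*(r)$ for all $\lambda\ge1$, $r>1/T_3$ (with $1/\infty=0$). *)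

theory Defs
  imports "HOL-Analysis.Analysis"
begin

text \<open>Generating triplet (A,N,b) of a Levy process in R^d, with R^d rendered as real^'n.\<close>

definition sym_nonneg_matrix :: "real^'n^'n \<Rightarrow> bool" where
  "sym_nonneg_matrix A \<longleftrightarrow> transpose A = A \<and> (\<forall>x. 0 \<le> x \<bullet> (A *v x))"

definition levy_measure :: "(real^'n) measure \<Rightarrow> bool" where
  "levy_measure N \<longleftrightarrow> sets N = sets borel \<and> emeasure N {0} = 0 \<and>
     (\<integral>\<^sup>+ y. ennreal (min 1 (norm y ^ 2)) \<partial>N) < \<infinity>"

text \<open>Characteristic exponent given by the Levy-Khintchine formula:
  E exp(i<x,Y_t>) = exp(-t Psi(x)).\<close>
definition char_exp :: "real^'n^'n \<Rightarrow> (real^'n) measure \<Rightarrow> real^'n \<Rightarrow> real^'n \<Rightarrow> complex" where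
  "char_exp A N b x =
     complex_of_real (x \<bullet> (A *v x) / 2) - \<i> * complex_of_real (b \<bullet> x)
     + integral\<^sup>L N (\<lambda>y. 1 - cis (x \<bullet> y)
                         + \<i> * complex_of_real (x \<bullet> y) * indicator (cball 0 1) y)"

definition Psi_star :: "real^'n^'n \<Rightarrow> (real^'n) measure \<Rightarrow> real^'n \<Rightarrow> real \<Rightarrow> real" where
  "Psi_star A N b r = Sup ((\<lambda>z. Re (char_exp A N b z)) ` cball 0 r)"

definition levy_h :: "real^'n^'n \<Rightarrow> (real^'n) measure \<Rightarrow> real \<Rightarrow> real" where
  "levy_h A N r = onorm (\<lambda>x. A *v x) / r\<^sup>2 + integral\<^sup>L N (\<lambda>y. min 1 (norm y ^ 2 / r\<^sup>2))"

definition inv_T :: "ereal \<Rightarrow> real" where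
  "inv_T T = (if T = \<infinity> then 0 else 1 / real_of_ereal T)"

definition C3_with :: "real^'n^'n \<Rightarrow> (real^'n) measure \<Rightarrow> real^'n \<Rightarrow> ereal \<Rightarrow> real \<Rightarrow> real \<Rightarrow> bool" where
  "C3_with A N b T3 c3 \<alpha>3 \<longleftrightarrow>
     0 < T3 \<and> 0 < c3 \<and> c3 \<le> 1 \<and> 0 < \<alpha>3 \<and> \<alpha>3 \<le> 2 \<and>
     (\<forall>x. inv_T T3 < norm x \<longrightarrow> c3 * Psi_star A N b (norm x) \<le> Re (char_exp A N b x)) \<and>
     (\<forall>lam r. 1 \<le> lam \<longrightarrow> inv_T T3 < r \<longrightarrow>
        c3 * lam powr \<alpha>3 * Psi_star A N b r \<le> Psi_star A N b (lam * r))"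

definition C3 :: "real^'n^'n \<Rightarrow> (real^'n) measure \<Rightarrow> real^'n \<Rightarrow> bool" where
  "C3 A N b \<longleftrightarrow> (\<exists>T3 c3 \<alpha>3. C3_with A N b T3 c3 \<alpha>3)"

end

theory Submission
  imports Defs "HOL-Real_Asymp.Real_Asymp"
begin

text \<open>The real part of the exponent is the quadratic form plus the jump integral of
  \<open>1 - cos \<langle>z,y\<rangle>\<close>, which lies between \<open>0\<close> and \<open>2 \<integral> min 1 (\<bar>z\<bar>\<^sup>2\<bar>y\<bar>\<^sup>2) N(dy)\<close>; the latter is
  bounded by \<open>O(\<bar>z\<bar>\<^sup>2)\<close> for \<open>\<bar>z\<bar> \<ge> 1\<close> (for all \<open>z\<close> under a finite second moment) and is
  \<open>o(\<bar>z\<bar>\<^sup>2)\<close> at infinity. If \<open>A\<close> is nondegenerate, \<open>Re \<Psi>\<close> and \<open>\<Psi>\<^sup>*\<close> are therefore both of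
  exact order \<open>\<bar>x\<bar>\<^sup>2\<close>, which gives (C3) with \<open>\<alpha>\<^sub>3 = 2\<close>. If \<open>A \<noteq> 0\<close> has a kernel vector \<open>v\<close>,
  then \<open>\<Psi>\<^sup>*(t)\<close> grows like \<open>t\<^sup>2\<close> while \<open>Re \<Psi>(t v)\<close> is only the jump part, hence \<open>o(t\<^sup>2)\<close>,
  contradicting the first inequality of (C3).\<close>

lemma one_minus_cos_le_two_min_sq: "1 - cos (s::real) \<le> 2 * min 1 (s\<^sup>2)"
proof -
  have "1 - cos s = 2 * (sin (s/2))\<^sup>2"
    using cos_double_sin[of "s/2"] by simp
  also have "(sin (s/2))\<^sup>2 \<le> (s/2)\<^sup>2"
    using abs_sin_x_le_abs_x[of "s/2"] by (metis abs_le_square_iff)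
  finally have "1 - cos s \<le> s\<^sup>2 / 2" by (simp add: power_divide)
  hence "1 - cos s \<le> 2 * s\<^sup>2" using zero_le_power2[of s] by linarith
  moreover have "1 - cos s \<le> 2" using cos_ge_minus_one[of s] by linarith
  ultimately show ?thesis by (simp add: min_def)
qed

lemma Re_integral_bounds:
  fixes f :: "'a \<Rightarrow> complex"
  assumes g: "integrable M g"
    and nonneg: "\<And>y. 0 \<le> Re (f y)" and le: "\<And>y. Re (f y) \<le> g y"
  shows "0 \<le> Re (integral\<^sup>L M f)" "Re (integral\<^sup>L M f) \<le> integral\<^sup>L M g"
proof -
  have "0 \<le> integral\<^sup>L M g"
    using nonneg le by (intro integral_nonneg_AE) (auto intro: order_trans)
  show "0 \<le> Re (integral\<^sup>L M f)"
  proof (cases "integrable M f")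
    case True
    thus ?thesis using integral_nonneg_AE[of "\<lambda>y. Re (f y)" M] nonneg by simp
  qed (simp add: not_integrable_integral_eq)
  show "Re (integral\<^sup>L M f) \<le> integral\<^sup>L M g"
  proof (cases "integrable M f")
    case True
    thus ?thesis using integral_mono[of M "\<lambda>y. Re (f y)" g] g le by simp
  qed (simp add: not_integrable_integral_eq \<open>0 \<le> integral\<^sup>L M g\<close>)
qed

lemma levy_measure_measurable_iff:
  assumes "levy_measure N"
  shows "g \<in> borel_measurable N \<longleftrightarrow> g \<in> borel_measurable borel"
  using assms unfolding levy_measure_def by (simp cong: measurable_cong_sets)

definition trunc_moment :: "(real^'n) measure \<Rightarrow> real \<Rightarrow> real" where
  "trunc_moment N r = integral\<^sup>L N (\<lambda>y. min 1 ((r * norm y)\<^sup>2))"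

lemma min_one_scaled_sq_le: "min 1 ((r * s)\<^sup>2) \<le> max 1 (r\<^sup>2) * min 1 ((s::real)\<^sup>2)"
proof (cases "s\<^sup>2 \<le> 1")
  case True
  have "(r * s)\<^sup>2 \<le> max 1 (r\<^sup>2) * s\<^sup>2"
    by (simp add: power_mult_distrib mult_right_mono)
  thus ?thesis using True by (auto simp: min_def)
qed (auto simp: min_def max_def)

lemma integrable_trunc_moment:
  fixes N :: "(real^'n) measure"
  assumes "levy_measure N"
  shows "integrable N (\<lambda>y. min 1 ((r * norm y)\<^sup>2))"
proof (rule Bochner_Integration.integrable_bound)
  have "integrable N (\<lambda>y. min 1 ((norm y)\<^sup>2))"
    using assms unfolding levy_measure_def
    by (intro integrableI_nonneg) (auto simp: levy_measure_measurable_iff[OF assms])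
  thus "integrable N (\<lambda>y. max 1 (r\<^sup>2) * min 1 ((norm y)\<^sup>2))" by simp
  show "(\<lambda>y. min 1 ((r * norm y)\<^sup>2)) \<in> borel_measurable N"
    unfolding levy_measure_measurable_iff[OF assms] by measurable
  show "AE y in N. norm (min 1 ((r * norm y)\<^sup>2)) \<le> norm (max 1 (r\<^sup>2) * min 1 ((norm y)\<^sup>2))"
    using min_one_scaled_sq_le by simp
qed

lemma trunc_moment_mono:
  assumes "levy_measure N" "0 \<le> r" "r \<le> s"
  shows "trunc_moment N r \<le> trunc_moment N s"
  unfolding trunc_moment_def using assms
  by (intro integral_mono integrable_trunc_moment min.mono order.refl power_mono mult_right_mono)
     auto

lemma trunc_moment_le_sq:
  assumes "levy_measure N" "1 \<le> r"
  shows "trunc_moment N r \<le> r\<^sup>2 * trunc_moment N 1"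
proof -
  have "trunc_moment N r \<le> integral\<^sup>L N (\<lambda>y. r\<^sup>2 * min 1 ((1 * norm y)\<^sup>2))"
    unfolding trunc_moment_def
  proof (intro integral_mono integrable_trunc_moment integrable_mult_right assms(1))
    fix y
    show "min 1 ((r * norm y)\<^sup>2) \<le> r\<^sup>2 * min 1 ((1 * norm y)\<^sup>2)"
      using min_one_scaled_sq_le[of r "norm y"] assms(2) by (simp add: max_def one_le_power)
  qed
  thus ?thesis by (simp add: trunc_moment_def)
qed

lemma trunc_moment_le_second_moment:
  fixes N :: "(real^'n) measure"
  assumes lev: "levy_measure N" and fin: "(\<integral>\<^sup>+ y. ennreal ((norm y)\<^sup>2) \<partial>N) < \<infinity>"
  shows "trunc_moment N r \<le> r\<^sup>2 * integral\<^sup>L N (\<lambda>y. (norm y)\<^sup>2)"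
proof -
  have "integrable N (\<lambda>y. (norm y)\<^sup>2)"
    using fin by (intro integrableI_nonneg) (auto simp: levy_measure_measurable_iff[OF lev])
  hence "trunc_moment N r \<le> integral\<^sup>L N (\<lambda>y. r\<^sup>2 * (norm y)\<^sup>2)"
    unfolding trunc_moment_def
    by (intro integral_mono integrable_trunc_moment lev integrable_mult_right)
       (simp_all add: power_mult_distrib)
  thus ?thesis by simp
qed

lemma trunc_moment_over_sq_tendsto_0:
  fixes N :: "(real^'n) measure"
  assumes lev: "levy_measure N"
  shows "((\<lambda>t. trunc_moment N t / t\<^sup>2) \<longlongrightarrow> 0) at_top"
proof -
  have rewrite: "trunc_moment N t / t\<^sup>2 = integral\<^sup>L N (\<lambda>y. min (1 / t\<^sup>2) ((norm y)\<^sup>2))"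
    if "t > 0" for t :: real
  proof -
    have "min 1 ((t * norm y)\<^sup>2) / t\<^sup>2 = min (1 / t\<^sup>2) ((norm y)\<^sup>2)" for y :: "real^'n"
      using that by (simp add: min_divide_distrib_right power_mult_distrib)
    thus ?thesis by (simp add: trunc_moment_def flip: integral_divide_zero)
  qed
  have "((\<lambda>t. integral\<^sup>L N (\<lambda>y. min (1 / t\<^sup>2) ((norm y)\<^sup>2))) \<longlongrightarrow> integral\<^sup>L N (\<lambda>y. 0::real)) at_top"
  proof (rule integral_dominated_convergence_at_top[where w="\<lambda>y. min 1 ((1 * norm y)\<^sup>2)"])
    show "(\<lambda>y. min (1 / t\<^sup>2) ((norm y)\<^sup>2)) \<in> borel_measurable N" for t
      unfolding levy_measure_measurable_iff[OF lev] by measurable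
    show "AE y in N. ((\<lambda>t. min (1 / t\<^sup>2) ((norm y)\<^sup>2)) \<longlongrightarrow> 0) at_top"
    proof (rule AE_I2)
      fix y :: "real^'n"
      have "((\<lambda>t::real. 1 / t\<^sup>2) \<longlongrightarrow> 0) at_top" by real_asymp
      from tendsto_min[OF this tendsto_const[of "(norm y)\<^sup>2"]]
      show "((\<lambda>t. min (1 / t\<^sup>2) ((norm y)\<^sup>2)) \<longlongrightarrow> 0) at_top" by simp
    qed
    show "\<forall>\<^sub>F t in at_top. AE y in N. norm (min (1 / t\<^sup>2) ((norm y)\<^sup>2)) \<le> min 1 ((1 * norm y)\<^sup>2)"
      using eventually_ge_at_top[of "1::real"]
    proof eventually_elim
      case (elim t)
      hence "1 / t\<^sup>2 \<le> 1" by (simp add: one_le_power)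
      thus ?case by (intro AE_I2) (auto simp: min_def)
    qed
  qed (use integrable_trunc_moment[OF lev, of 1] in simp_all)
  moreover have "\<forall>\<^sub>F t in at_top. integral\<^sup>L N (\<lambda>y. min (1 / t\<^sup>2) ((norm y)\<^sup>2)) = trunc_moment N t / t\<^sup>2"
    using eventually_gt_at_top[of "0::real"] by eventually_elim (simp add: rewrite)
  ultimately show ?thesis by (simp add: tendsto_cong)
qed

lemma quadratic_form_le_onorm:
  fixes A :: "real^'n^'n"
  shows "z \<bullet> (A *v z) \<le> onorm ((*v) A) * (norm z)\<^sup>2"
proof -
  have "z \<bullet> (A *v z) \<le> norm z * norm (A *v z)" by (rule norm_cauchy_schwarz)
  also have "\<dots> \<le> norm z * (onorm ((*v) A) * norm z)"
    by (intro mult_left_mono onorm) auto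
  finally show ?thesis by (simp add: power2_eq_square algebra_simps)
qed

lemma sym_nonneg_matrix_quadratic_form_eq_0:
  fixes A :: "real^'n^'n"
  assumes psd: "sym_nonneg_matrix A" and u: "u \<bullet> (A *v u) = 0"
  shows "A *v u = 0"
proof (rule ccontr)
  assume "A *v u \<noteq> 0"
  define w where "w = A *v u"
  define c where "c = w \<bullet> w"
  define d where "d = w \<bullet> (A *v w)"
  have "c > 0" using \<open>A *v u \<noteq> 0\<close> by (simp add: c_def w_def)
  have "d \<ge> 0" using psd by (simp add: d_def sym_nonneg_matrix_def)
  have "u \<bullet> (A *v w) = (A *v u) \<bullet> w"
    using psd by (simp add: sym_nonneg_matrix_def dot_lmul_matrix flip: vector_transpose_matrix)
  \<comment> \<open>the quadratic form is nonnegative along the line \<open>u + t w\<close>, but has slope \<open>2 c > 0\<close> at \<open>t = 0\<close>\<close>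
  define t where "t = - c / (d + 1)"
  have "0 \<le> (u + t *\<^sub>R w) \<bullet> (A *v (u + t *\<^sub>R w))"
    using psd by (simp add: sym_nonneg_matrix_def)
  also have "\<dots> = t * (2 * c + t * d)"
    using u \<open>u \<bullet> (A *v w) = (A *v u) \<bullet> w\<close>
    by (simp add: algebra_simps inner_add_left inner_add_right inner_commute c_def d_def w_def)
  finally have "0 \<le> t * (2 * c + t * d)" .
  moreover have "t < 0" using \<open>c > 0\<close> \<open>d \<ge> 0\<close> by (simp add: t_def)
  moreover have "2 * c + t * d > 0"
  proof -
    have "- t * d \<le> - t * (d + 1)" using \<open>t < 0\<close> by simp
    also have "\<dots> = c" using \<open>d \<ge> 0\<close> by (simp add: t_def)
    finally show ?thesis using \<open>c > 0\<close> by linarith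
  qed
  ultimately show False using mult_neg_pos[of t "2 * c + t * d"] by linarith
qed

lemma det_neq_0_iff_ker_trivial:
  fixes A :: "real^'n^'n"
  shows "det A \<noteq> 0 \<longleftrightarrow> (\<forall>v. A *v v = 0 \<longrightarrow> v = 0)"
  using det_nz_iff_inj[OF matrix_vector_mul_linear[of A]] by (simp add: vec.inj_iff_eq_0)

lemma sym_nonneg_matrix_coercive:
  fixes A :: "real^'n^'n"
  assumes psd: "sym_nonneg_matrix A" and det: "det A \<noteq> 0"
  obtains m where "m > 0" "\<And>z. m * (norm z)\<^sup>2 \<le> z \<bullet> (A *v z)"
proof -
  have cont: "continuous_on (sphere 0 1) (\<lambda>z::real^'n. z \<bullet> (A *v z))"
    by (intro continuous_intros linear_continuous_on matrix_vector_mul_bounded_linear)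
  obtain e :: "real^'n" where "e \<in> Basis" using nonempty_Basis by blast
  hence "sphere (0::real^'n) 1 \<noteq> {}" by (auto intro!: exI[of _ e])
  from continuous_attains_inf[OF compact_sphere this cont]
  obtain x0 where x0: "norm x0 = 1" "\<And>y. norm y = 1 \<Longrightarrow> x0 \<bullet> (A *v x0) \<le> y \<bullet> (A *v y)"
    by auto
  define m where "m = x0 \<bullet> (A *v x0)"
  have "m \<ge> 0" using psd by (simp add: m_def sym_nonneg_matrix_def)
  moreover have "m \<noteq> 0"
    using x0(1) det sym_nonneg_matrix_quadratic_form_eq_0[OF psd, of x0]
    by (auto simp: m_def det_neq_0_iff_ker_trivial)
  ultimately have "m > 0" by simp
  moreover have "m * (norm z)\<^sup>2 \<le> z \<bullet> (A *v z)" for z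
  proof (cases "z = 0")
    case False
    define u where "u = (1 / norm z) *\<^sub>R z"
    have "norm u = 1" using False by (simp add: u_def)
    have "z \<bullet> (A *v z) = (norm z)\<^sup>2 * (u \<bullet> (A *v u))"
      using False by (simp add: u_def matrix_vector_mult_scaleR power2_eq_square)
    also have "\<dots> \<ge> (norm z)\<^sup>2 * m"
      using x0(2)[OF \<open>norm u = 1\<close>] by (simp add: m_def mult_left_mono)
    finally show ?thesis by (simp add: mult.commute)
  qed simp
  ultimately show ?thesis using that by blast
qed

lemma sym_nonneg_matrix_nonzero_obtains_unit:
  fixes A :: "real^'n^'n"
  assumes psd: "sym_nonneg_matrix A" and "A \<noteq> 0"
  obtains u where "norm u = 1" "0 < u \<bullet> (A *v u)"
proof -
  obtain u0 where "u0 \<bullet> (A *v u0) \<noteq> 0"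
    using sym_nonneg_matrix_quadratic_form_eq_0[OF psd] \<open>A \<noteq> 0\<close> by (metis matrix_eq matrix_vector_mult_0)
  moreover have "0 \<le> u0 \<bullet> (A *v u0)" using psd by (simp add: sym_nonneg_matrix_def)
  moreover have "(u0 /\<^sub>R norm u0) \<bullet> (A *v (u0 /\<^sub>R norm u0)) = u0 \<bullet> (A *v u0) / (norm u0)\<^sup>2"
    by (simp add: matrix_vector_mult_scaleR power2_eq_square divide_inverse inverse_mult_distrib)
  ultimately show ?thesis
    using that[of "u0 /\<^sub>R norm u0"] by (cases "u0 = 0") auto
qed

lemma Re_char_exp_bounds:
  fixes N :: "(real^'n) measure"
  assumes lev: "levy_measure N"
  shows "z \<bullet> (A *v z) / 2 \<le> Re (char_exp A N b z)"
    "Re (char_exp A N b z) \<le> z \<bullet> (A *v z) / 2 + 2 * trunc_moment N (norm z)"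
proof -
  let ?f = "\<lambda>y. 1 - cis (z \<bullet> y) + \<i> * complex_of_real (z \<bullet> y) * indicator (cball 0 1) y"
  let ?g = "\<lambda>y. 2 * min 1 ((norm z * norm y)\<^sup>2)"
  have Re_f: "Re (?f y) = 1 - cos (z \<bullet> y)" for y by (simp add: indicator_def)
  have "0 \<le> Re (?f y)" for y unfolding Re_f by simp
  moreover have "Re (?f y) \<le> ?g y" for y
  proof -
    have "(z \<bullet> y)\<^sup>2 \<le> (norm z * norm y)\<^sup>2"
      using power_mono[OF Cauchy_Schwarz_ineq2[of z y] abs_ge_zero, of 2] by simp
    thus ?thesis unfolding Re_f using one_minus_cos_le_two_min_sq[of "z \<bullet> y"] by simp
  qed
  moreover have "integrable N ?g" using integrable_trunc_moment[OF lev] by simp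
  ultimately have "0 \<le> Re (integral\<^sup>L N ?f)" "Re (integral\<^sup>L N ?f) \<le> integral\<^sup>L N ?g"
    using Re_integral_bounds[of N ?g ?f] by blast+
  moreover have "integral\<^sup>L N ?g = 2 * trunc_moment N (norm z)" by (simp add: trunc_moment_def)
  moreover have "Re (char_exp A N b z) = z \<bullet> (A *v z) / 2 + Re (integral\<^sup>L N ?f)"
    by (simp add: char_exp_def)
  ultimately show "z \<bullet> (A *v z) / 2 \<le> Re (char_exp A N b z)"
    "Re (char_exp A N b z) \<le> z \<bullet> (A *v z) / 2 + 2 * trunc_moment N (norm z)"
    by linarith+
qed

lemma Re_char_exp_le_on_cball:
  fixes N :: "(real^'n) measure"
  assumes lev: "levy_measure N" and "norm z \<le> r"
  shows "Re (char_exp A N b z) \<le> onorm ((*v) A) * r\<^sup>2 / 2 + 2 * trunc_moment N r"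
proof -
  have "onorm ((*v) A) * (norm z)\<^sup>2 \<le> onorm ((*v) A) * r\<^sup>2"
    using assms(2)
    by (intro mult_left_mono power_mono onorm_pos_le matrix_vector_mul_bounded_linear) auto
  hence "z \<bullet> (A *v z) \<le> onorm ((*v) A) * r\<^sup>2"
    using quadratic_form_le_onorm[of z A] by linarith
  moreover have "trunc_moment N (norm z) \<le> trunc_moment N r"
    using trunc_moment_mono[OF lev] assms(2) by simp
  ultimately show ?thesis using Re_char_exp_bounds(2)[OF lev, of A b z] by linarith
qed

lemma Psi_star_le:
  fixes N :: "(real^'n) measure"
  assumes "levy_measure N" "0 \<le> r"
  shows "Psi_star A N b r \<le> onorm ((*v) A) * r\<^sup>2 / 2 + 2 * trunc_moment N r"
  unfolding Psi_star_def using assms by (intro cSup_least) (auto intro: Re_char_exp_le_on_cball)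

lemma Re_char_exp_le_Psi_star:
  fixes N :: "(real^'n) measure"
  assumes "levy_measure N" "norm z \<le> r"
  shows "Re (char_exp A N b z) \<le> Psi_star A N b r"
  unfolding Psi_star_def using assms
  by (intro cSup_upper bdd_aboveI[of _ "onorm ((*v) A) * r\<^sup>2 / 2 + 2 * trunc_moment N r"])
     (auto intro: Re_char_exp_le_on_cball)

lemma inv_T_nonneg: "0 < T \<Longrightarrow> 0 \<le> inv_T T"
  by (cases T) (auto simp: inv_T_def)

lemma C3_with_if_trunc_moment_quadratic:
  fixes A :: "real^'n^'n" and N :: "(real^'n) measure"
  assumes psd: "sym_nonneg_matrix A" and det: "det A \<noteq> 0" and lev: "levy_measure N"
    and T: "0 < T" and bound: "\<And>r. inv_T T < r \<Longrightarrow> trunc_moment N r \<le> M * r\<^sup>2"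
  shows "\<exists>c3. C3_with A N b T c3 2"
proof -
  obtain m where "m > 0" and coercive: "\<And>z. m * (norm z)\<^sup>2 \<le> z \<bullet> (A *v z)"
    using sym_nonneg_matrix_coercive[OF psd det] by blast
  define M' where "M' = max (onorm ((*v) A) / 2 + 2 * M) 1"
  define c3 where "c3 = min 1 (m / (2 * M'))"
  have "M' > 0" "c3 > 0" using \<open>m > 0\<close> by (simp_all add: M'_def c3_def)
  have "c3 * M' \<le> m / 2"
    using \<open>M' > 0\<close> by (simp add: c3_def min_def field_simps)
  have upper: "c3 * Psi_star A N b r \<le> m / 2 * s\<^sup>2" if "inv_T T < r" "r \<le> s" for r s
  proof -
    have "0 \<le> r" using inv_T_nonneg[OF T] that(1) by linarith
    have "Psi_star A N b r \<le> (onorm ((*v) A) / 2 + 2 * M) * r\<^sup>2"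
      using Psi_star_le[OF lev \<open>0 \<le> r\<close>, of A b] bound[OF that(1)] by (simp add: algebra_simps)
    also have "\<dots> \<le> M' * r\<^sup>2" by (intro mult_right_mono) (auto simp: M'_def)
    also have "\<dots> \<le> M' * s\<^sup>2"
      using \<open>M' > 0\<close> \<open>0 \<le> r\<close> that(2) by (intro mult_left_mono power_mono) auto
    finally have "c3 * Psi_star A N b r \<le> (c3 * M') * s\<^sup>2"
      using \<open>c3 > 0\<close> by (simp add: mult.assoc)
    also have "\<dots> \<le> m / 2 * s\<^sup>2" using \<open>c3 * M' \<le> m / 2\<close> by (intro mult_right_mono) auto
    finally show ?thesis .
  qed
  have lower: "m / 2 * (norm z)\<^sup>2 \<le> Re (char_exp A N b z)" for z
    using coercive[of z] Re_char_exp_bounds(1)[OF lev, of z A b] by linarith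
  obtain e :: "real^'n" where "norm e = 1" using norm_Basis nonempty_Basis by blast
  have "C3_with A N b T c3 2"
    unfolding C3_with_def
  proof (intro conjI allI impI)
    fix x :: "real^'n"
    assume "inv_T T < norm x"
    from upper[OF this order.refl] lower[of x]
    show "c3 * Psi_star A N b (norm x) \<le> Re (char_exp A N b x)" by linarith
  next
    fix lam r :: real
    assume "1 \<le> lam" "inv_T T < r"
    hence "0 \<le> r" "r \<le> lam * r" using inv_T_nonneg[OF T] by (auto intro: mult_right_mono[of 1])
    have "c3 * lam powr 2 * Psi_star A N b r = lam\<^sup>2 * (c3 * Psi_star A N b r)"
      using \<open>1 \<le> lam\<close> by (simp add: powr_numeral)
    also have "\<dots> \<le> lam\<^sup>2 * (m / 2 * r\<^sup>2)"
      using mult_left_mono[OF upper[OF \<open>inv_T T < r\<close> order.refl], of "lam\<^sup>2"] by simp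
    also have "\<dots> = m / 2 * (norm ((lam * r) *\<^sub>R e))\<^sup>2"
      using \<open>norm e = 1\<close> by (simp add: power_mult_distrib)
    also have "\<dots> \<le> Re (char_exp A N b ((lam * r) *\<^sub>R e))" by (rule lower)
    also have "\<dots> \<le> Psi_star A N b (lam * r)"
      using \<open>norm e = 1\<close> \<open>0 \<le> r\<close> \<open>r \<le> lam * r\<close>
      by (intro Re_char_exp_le_Psi_star[OF lev]) simp
    finally show "c3 * lam powr 2 * Psi_star A N b r \<le> Psi_star A N b (lam * r)" .
  qed (use T \<open>c3 > 0\<close> in \<open>auto simp: c3_def\<close>)
  thus ?thesis by blast
qed

lemma C3_with_imp_det_neq_0:
  fixes A :: "real^'n^'n" and N :: "(real^'n) measure"
  assumes psd: "sym_nonneg_matrix A" and lev: "levy_measure N"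
    and C3: "C3_with A N b T c3 \<alpha>3" and "A \<noteq> 0"
  shows "det A \<noteq> 0"
proof
  assume "det A = 0"
  then obtain v0 where "A *v v0 = 0" "v0 \<noteq> 0" using det_neq_0_iff_ker_trivial by blast
  define v where "v = v0 /\<^sub>R norm v0"
  have "A *v v = 0" "norm v = 1"
    using \<open>A *v v0 = 0\<close> \<open>v0 \<noteq> 0\<close> by (simp_all add: v_def matrix_vector_mult_scaleR)
  obtain u where "norm u = 1" and "0 < u \<bullet> (A *v u)" (is "0 < ?a")
    using sym_nonneg_matrix_nonzero_obtains_unit[OF psd \<open>A \<noteq> 0\<close>] by blast
  have "c3 > 0" using C3 by (simp add: C3_with_def)
  have C3_lower: "c3 * Psi_star A N b (norm x) \<le> Re (char_exp A N b x)" if "inv_T T < norm x" for x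
    using C3 that unfolding C3_with_def by blast
  have "c3 * ?a / 4 \<le> trunc_moment N t / t\<^sup>2" if "t > max (inv_T T) 1" for t
  proof -
    have "t > 0" "inv_T T < t" using that by auto
    have "t\<^sup>2 * ?a / 2 = (t *\<^sub>R u) \<bullet> (A *v (t *\<^sub>R u)) / 2"
      by (simp add: matrix_vector_mult_scaleR power2_eq_square)
    also have "\<dots> \<le> Re (char_exp A N b (t *\<^sub>R u))" by (rule Re_char_exp_bounds(1)[OF lev])
    also have "\<dots> \<le> Psi_star A N b t"
      using \<open>norm u = 1\<close> \<open>t > 0\<close> by (intro Re_char_exp_le_Psi_star[OF lev]) simp
    finally have "c3 * (t\<^sup>2 * ?a / 2) \<le> c3 * Psi_star A N b t" using \<open>c3 > 0\<close> by simp
    also have "\<dots> \<le> Re (char_exp A N b (t *\<^sub>R v))"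
      using C3_lower[of "t *\<^sub>R v"] \<open>inv_T T < t\<close> \<open>norm v = 1\<close> \<open>t > 0\<close> by simp
    also have "\<dots> \<le> 2 * trunc_moment N t"
      using Re_char_exp_bounds(2)[OF lev, of A b "t *\<^sub>R v"] \<open>A *v v = 0\<close> \<open>norm v = 1\<close> \<open>t > 0\<close>
      by (simp add: matrix_vector_mult_scaleR)
    finally show ?thesis using \<open>t > 0\<close> by (simp add: field_simps)
  qed
  hence "\<forall>\<^sub>F t in at_top. c3 * ?a / 4 \<le> trunc_moment N t / t\<^sup>2"
    using eventually_gt_at_top by (rule eventually_mono[rotated])
  hence "c3 * ?a / 4 \<le> 0"
    by (rule tendsto_lowerbound[OF trunc_moment_over_sq_tendsto_0[OF lev]]) simp
  thus False using mult_pos_pos[OF \<open>c3 > 0\<close> \<open>0 < ?a\<close>] by linarith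
qed

theorem lemma4p1:
  fixes A :: "real^'n^'n" and N :: "(real^'n) measure" and b :: "real^'n"
  assumes "sym_nonneg_matrix A"
    and "levy_measure N"
    and "filterlim (levy_h A N) at_top (at_right 0)"
  shows "(det A \<noteq> 0 \<longleftrightarrow> C3 A N b \<and> A \<noteq> 0) \<and>
         (det A \<noteq> 0 \<and> (\<integral>\<^sup>+ y. ennreal (norm y ^ 2) \<partial>N) < \<infinity> \<longrightarrow>
           (\<exists>c3 \<alpha>3. C3_with A N b \<infinity> c3 \<alpha>3))"
proof (intro conjI iffI impI)
  assume "det A \<noteq> 0"
  hence "\<exists>c3. C3_with A N b 1 c3 2"
    using trunc_moment_le_sq[OF assms(2)]
    by (intro C3_with_if_trunc_moment_quadratic[OF assms(1) _ assms(2), where M = "trunc_moment N 1"])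
       (auto simp: inv_T_def mult.commute)
  thus "C3 A N b" by (auto simp: C3_def)
next
  show "det A \<noteq> 0 \<Longrightarrow> A \<noteq> 0" by (metis mat_0 det_0)
next
  assume "C3 A N b \<and> A \<noteq> 0"
  thus "det A \<noteq> 0" using C3_with_imp_det_neq_0[OF assms(1,2)] by (auto simp: C3_def)
next
  assume "det A \<noteq> 0 \<and> (\<integral>\<^sup>+ y. ennreal (norm y ^ 2) \<partial>N) < \<infinity>"
  hence "\<exists>c3. C3_with A N b \<infinity> c3 2"
    using trunc_moment_le_second_moment[OF assms(2)]
    by (intro C3_with_if_trunc_moment_quadratic[OF assms(1) _ assms(2),
          where M = "integral\<^sup>L N (\<lambda>y. (norm y)\<^sup>2)"]) (auto simp: mult.commute)
  thus "\<exists>c3 \<alpha>3. C3_with A N b \<infinity> c3 \<alpha>3" by blast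
qed

end
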